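(* Let $T$ be a quasi-binary tree with $|V(T)|>1$ and vertex weight function $\omega:V(T)\to\mathbb{R}$. Let $\gamma\in\mathbb{R}$ with $\gamma\ge\omega_3$. If $$\omega(T)\ge\max\left\{\frac{3\omega_1-\gamma}{2},\ 3\omega_2-2\gamma\right\},$$ then $$\beta_2(T)\ge\frac{\omega(T)-\gamma}{3}\quad\text{and}\quad \alpha_2(T)\le\frac{2\omega(T)+\gamma}{3}.$$
   Context: A binary tree is a tree in which every vertex has degree $3$, except for pending vertices (degree $1$) and one root vertex (degree $2$). A tree is quasi-binary if it is a connected subgraph of a binary tree; in particular every vertex has degree $1$, $2$ or $3$. For a subgraph $H$ write $\omega(H)=\sum_{v\in V(H)}\omega(v)$. For $i=1,2,3$ let $V_i$ be the set of vertices of degree $i$, and let $\omega_i=\max\{\omega(v): v\in V_j \text{ for some } j \text{ with } i\le j\le 3\}$ (the maximum weight of a vertex of degree at least $i$). For an edge $e$, let $C^1_e, C^2_e$ be the two components of $T\setminus\{e\}$. Define $\alpha_2(T)=\min_{e\in E(T)}\max\{\omega(C^1_e),\omega(C^2_e)\}$ and $\beta_2(T)=\max_{e\in E(T)}\min\{\omega(C^1_e),\omega(C^2_e)\}$. *)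

theory Defs
  imports Complex_Main
begin

definition graph :: "'a set \<Rightarrow> 'a set set \<Rightarrow> bool" where
  "graph V E \<longleftrightarrow> finite V \<and> (\<forall>e\<in>E. e \<subseteq> V \<and> card e = 2)"

definition adjrel :: "'a set set \<Rightarrow> ('a \<times> 'a) set" where
  "adjrel E = {(x, y). {x, y} \<in> E}"

definition connected_graph :: "'a set \<Rightarrow> 'a set set \<Rightarrow> bool" where
  "connected_graph V E \<longleftrightarrow> (\<forall>u\<in>V. \<forall>v\<in>V. (u, v) \<in> (adjrel E)\<^sup>*)"

definition is_tree :: "'a set \<Rightarrow> 'a set set \<Rightarrow> bool" where
  "is_tree V E \<longleftrightarrow> graph V E \<and> V \<noteq> {} \<and> connected_graph V E \<and> card E = card V - 1"

definition deg :: "'a set set \<Rightarrow> 'a \<Rightarrow> nat" where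
  "deg E v = card {u. {u, v} \<in> E}"

definition binary_tree :: "nat set \<Rightarrow> nat set set \<Rightarrow> bool" where
  "binary_tree B F \<longleftrightarrow> is_tree B F \<and>
     (\<exists>r\<in>B. deg F r = 2 \<and> (\<forall>v\<in>B. v \<noteq> r \<longrightarrow> deg F v = 1 \<or> deg F v = 3))"

definition quasi_binary :: "'a set \<Rightarrow> 'a set set \<Rightarrow> bool" where
  "quasi_binary V E \<longleftrightarrow> is_tree V E \<and>
     (\<exists>B F (f :: 'a \<Rightarrow> nat). binary_tree B F \<and> inj_on f V \<and> f ` V \<subseteq> B \<and>
        (\<forall>u\<in>V. \<forall>v\<in>V. {u, v} \<in> E \<longrightarrow> {f u, f v} \<in> F))"

definition comp :: "'a set \<Rightarrow> 'a set set \<Rightarrow> 'a \<Rightarrow> 'a set" where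
  "comp V E' x = {y \<in> V. (x, y) \<in> (adjrel E')\<^sup>*}"

definition wt :: "('a \<Rightarrow> real) \<Rightarrow> 'a set \<Rightarrow> real" where
  "wt \<omega> H = (\<Sum>v\<in>H. \<omega> v)"

text \<open>For an edge e = {u,v}, the two components of T - e are comp(u) and comp(v).\<close>
definition alpha2 :: "'a set \<Rightarrow> 'a set set \<Rightarrow> ('a \<Rightarrow> real) \<Rightarrow> real" where
  "alpha2 V E \<omega> = Min ((\<lambda>e. Max ((\<lambda>x. wt \<omega> (comp V (E - {e}) x)) ` e)) ` E)"

definition beta2 :: "'a set \<Rightarrow> 'a set set \<Rightarrow> ('a \<Rightarrow> real) \<Rightarrow> real" where
  "beta2 V E \<omega> = Max ((\<lambda>e. Min ((\<lambda>x. wt \<omega> (comp V (E - {e}) x)) ` e)) ` E)"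

end

theory Submission
  imports Defs
begin

text \<open>Call an endpoint of an edge light if its side of the edge has weight below
  \<open>t = (\<omega>(T) - \<gamma>)/3\<close>. If every edge had a light endpoint, then, as there are fewer edges
  than vertices, some vertex \<open>v\<close> would be the light endpoint of none of its edges; the
  branches at \<open>v\<close> would all be light and \<open>\<omega>(T) < \<omega>(v) + deg(v) t\<close>, which the hypotheses
  rule out for each of the possible degrees 1, 2, 3. Hence some edge has both sides of
  weight at least \<open>t\<close>, and since the two sides add up to \<open>\<omega>(T)\<close>, both are at most
  \<open>\<omega>(T) - t = (2\<omega>(T) + \<gamma>)/3\<close>.\<close>

definition neighbours :: "'a set set \<Rightarrow> 'a \<Rightarrow> 'a set" where
  "neighbours E v = {u. {u, v} \<in> E}"

lemma deg_eq_card_neighbours: "deg E v = card (neighbours E v)"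
  by (simp add: deg_def neighbours_def)

lemma adjrel_iff [simp]: "(x, y) \<in> adjrel E \<longleftrightarrow> {x, y} \<in> E"
  by (simp add: adjrel_def)

lemma rtrancl_adjrel_sym: "(x, y) \<in> (adjrel E)\<^sup>* \<Longrightarrow> (y, x) \<in> (adjrel E)\<^sup>*"
proof -
  have "sym (adjrel E)" unfolding adjrel_def sym_def by (auto simp: insert_commute)
  then show "(x, y) \<in> (adjrel E)\<^sup>* \<Longrightarrow> (y, x) \<in> (adjrel E)\<^sup>*"
    by (meson sym_rtrancl symD)
qed

lemma graph_finite_edges: "graph V E \<Longrightarrow> finite E"
  unfolding graph_def by (meson Pow_iff finite_Pow_iff finite_subset subsetI)

lemma graph_edgeD:
  assumes "graph V E" "{x, y} \<in> E"
  shows "x \<in> V" "y \<in> V"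
  using assms unfolding graph_def by auto

lemma graph_neighbours_subset: "graph V E \<Longrightarrow> neighbours E v \<subseteq> V"
  unfolding neighbours_def by (auto dest: graph_edgeD(1))

lemma graph_finite_neighbours: "graph V E \<Longrightarrow> finite (neighbours E v)"
  using graph_neighbours_subset unfolding graph_def by (metis finite_subset)

lemma is_treeD:
  assumes "is_tree V E"
  shows "graph V E" "finite V" "finite E" "card E = card V - 1"
    "\<And>u v. u \<in> V \<Longrightarrow> v \<in> V \<Longrightarrow> (u, v) \<in> (adjrel E)\<^sup>*"
  using assms graph_finite_edges unfolding is_tree_def graph_def connected_graph_def by auto

lemma comp_subset: "comp V E x \<subseteq> V"
  unfolding comp_def by blast

subsection \<open>Connected graphs have at least \<open>|V| - 1\<close> edges\<close>

lemma relpow_Least_step: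
  assumes "(v, r) \<in> R ^^ n" "v \<noteq> r"
  shows "\<exists>y. (v, y) \<in> R \<and> Suc (LEAST n. (y, r) \<in> R ^^ n) = (LEAST n. (v, r) \<in> R ^^ n)"
proof -
  define d where "d x = (LEAST n. (x, r) \<in> R ^^ n)" for x
  have v_d: "(v, r) \<in> R ^^ d v" unfolding d_def using assms(1) by (rule LeastI)
  with assms(2) obtain m where m: "d v = Suc m" by (cases "d v") auto
  with v_d obtain y where vy: "(v, y) \<in> R" and yr: "(y, r) \<in> R ^^ m"
    using relpow_Suc_D2 by metis
  have y_d: "(y, r) \<in> R ^^ d y" unfolding d_def using yr by (rule LeastI)
  have "d y \<le> m" unfolding d_def using yr by (rule Least_le)
  moreover have "d v \<le> Suc (d y)"
    unfolding d_def[of v] using relpow_Suc_I2[OF vy y_d] by (rule Least_le)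
  ultimately show ?thesis using vy m unfolding d_def by auto
qed

text \<open>Each vertex other than the root \<open>r\<close> is injectively assigned the first edge of a
  shortest walk to \<open>r\<close>.\<close>
lemma connected_card_vertices_le:
  assumes g: "graph V E" and r: "r \<in> V" and conn: "\<forall>v\<in>V. (v, r) \<in> (adjrel E)\<^sup>*"
  shows "card V \<le> card E + 1"
proof -
  define d where "d x = (LEAST n. (x, r) \<in> (adjrel E) ^^ n)" for x
  define p where "p v = (SOME y. (v, y) \<in> adjrel E \<and> Suc (d y) = d v)" for v
  have p: "{v, p v} \<in> E \<and> Suc (d (p v)) = d v" if v: "v \<in> V" "v \<noteq> r" for v
  proof -
    obtain n where "(v, r) \<in> (adjrel E) ^^ n" using conn v(1) rtrancl_power by blast
    from relpow_Least_step[OF this v(2)]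
    have "\<exists>y. (v, y) \<in> adjrel E \<and> Suc (d y) = d v" unfolding d_def .
    from someI_ex[OF this] show ?thesis unfolding p_def by simp
  qed
  have "inj_on (\<lambda>v. {v, p v}) (V - {r})"
  proof (rule inj_onI)
    fix v w assume v: "v \<in> V - {r}" and w: "w \<in> V - {r}" and eq: "{v, p v} = {w, p w}"
    show "v = w"
    proof (rule ccontr)
      assume "v \<noteq> w"
      then have "v = p w" "w = p v" using eq by (auto simp: doubleton_eq_iff)
      then show False using p[of v] p[of w] v w by auto
    qed
  qed
  moreover have "(\<lambda>v. {v, p v}) ` (V - {r}) \<subseteq> E" using p by auto
  ultimately have "card (V - {r}) \<le> card E"
    using card_inj_on_le graph_finite_edges[OF g] by blast
  then show ?thesis using r g unfolding graph_def by simp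
qed

subsection \<open>Removing an edge of a tree\<close>

lemma rtrancl_adjrel_Diff_edge:
  assumes "(u, y) \<in> (adjrel E)\<^sup>*"
  shows "(u, y) \<in> (adjrel (E - {{u, v}}))\<^sup>* \<or> (v, y) \<in> (adjrel (E - {{u, v}}))\<^sup>*"
  using assms
proof (induction rule: rtrancl_induct)
  case (step y z)
  show ?case
  proof (cases "{y, z} = {u, v}")
    case True
    then show ?thesis by (auto simp: doubleton_eq_iff)
  next
    case False
    then have "(y, z) \<in> adjrel (E - {{u, v}})" using step.hyps(2) by simp
    then show ?thesis using step.IH by (meson rtrancl_into_rtrancl)
  qed
qed simp

lemma tree_Diff_edge_disconnects:
  assumes t: "is_tree V E" and e: "{u, v} \<in> E"
  shows "(u, v) \<notin> (adjrel (E - {{u, v}}))\<^sup>*"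
proof
  let ?E' = "E - {{u, v}}"
  assume uv: "(u, v) \<in> (adjrel ?E')\<^sup>*"
  have uV: "u \<in> V" using graph_edgeD[OF is_treeD(1)[OF t] e] by simp
  have "graph V ?E'" using is_treeD(1)[OF t] unfolding graph_def by blast
  moreover have "\<forall>x\<in>V. (x, u) \<in> (adjrel ?E')\<^sup>*"
    using rtrancl_adjrel_Diff_edge[OF is_treeD(5)[OF t uV], of _ v] uv
    by (meson rtrancl_adjrel_sym rtrancl_trans)
  ultimately have "card V \<le> card ?E' + 1" using uV by (intro connected_card_vertices_le)
  moreover have "card ?E' = card E - 1" using e is_treeD(3)[OF t] by simp
  moreover have "card E > 0" using e is_treeD(3)[OF t] card_gt_0_iff by blast
  ultimately show False using is_treeD(4)[OF t] by arith
qed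

lemma tree_Diff_edge_comps:
  assumes t: "is_tree V E" and e: "{u, v} \<in> E"
  shows "comp V (E - {{u, v}}) u \<union> comp V (E - {{u, v}}) v = V"
    and "comp V (E - {{u, v}}) u \<inter> comp V (E - {{u, v}}) v = {}"
proof -
  let ?E' = "E - {{u, v}}"
  have uV: "u \<in> V" using graph_edgeD[OF is_treeD(1)[OF t] e] by simp
  show "comp V ?E' u \<union> comp V ?E' v = V"
  proof
    show "V \<subseteq> comp V ?E' u \<union> comp V ?E' v"
    proof
      fix y assume y: "y \<in> V"
      from rtrancl_adjrel_Diff_edge[OF is_treeD(5)[OF t uV y], of v]
      show "y \<in> comp V ?E' u \<union> comp V ?E' v" using y unfolding comp_def by blast
    qed
  qed (simp add: comp_subset)
  show "comp V ?E' u \<inter> comp V ?E' v = {}"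
  proof (rule ccontr)
    assume "comp V ?E' u \<inter> comp V ?E' v \<noteq> {}"
    then obtain y where "(u, y) \<in> (adjrel ?E')\<^sup>*" "(v, y) \<in> (adjrel ?E')\<^sup>*"
      unfolding comp_def by blast
    then have "(u, v) \<in> (adjrel ?E')\<^sup>*" by (meson rtrancl_adjrel_sym rtrancl_trans)
    with tree_Diff_edge_disconnects[OF t e] show False by contradiction
  qed
qed

lemma tree_wt_Diff_edge:
  assumes "is_tree V E" "{u, v} \<in> E"
  shows "wt \<omega> (comp V (E - {{u, v}}) u) + wt \<omega> (comp V (E - {{u, v}}) v) = wt \<omega> V"
  using tree_Diff_edge_comps[OF assms] is_treeD(2)[OF assms(1)] comp_subset
  unfolding wt_def by (metis finite_subset sum.union_disjoint)

subsection \<open>The branches at a vertex\<close>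

text \<open>The branch at \<open>v\<close> through the neighbour \<open>u\<close> is \<open>comp V (E - {{u, v}}) u\<close>.\<close>

lemma tree_in_branch:
  assumes t: "is_tree V E" and v: "v \<in> V" and y: "y \<in> V" "y \<noteq> v"
  shows "\<exists>u\<in>neighbours E v. y \<in> comp V (E - {{u, v}}) u"
proof -
  have "y = v \<or> (\<exists>u\<in>neighbours E v. (u, y) \<in> (adjrel (E - {{u, v}}))\<^sup>*)"
    if "(v, y) \<in> (adjrel E)\<^sup>*" for y
    using that
  proof (induction rule: rtrancl_induct)
    case (step y z)
    show ?case
    proof (cases "y = v")
      case True
      then show ?thesis using step.hyps(2) by (auto simp: neighbours_def insert_commute)
    next
      case False
      with step.IH obtain u where u: "u \<in> neighbours E v" "(u, y) \<in> (adjrel (E - {{u, v}}))\<^sup>*"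
        by blast
      show ?thesis
      proof (cases "{y, z} = {u, v}")
        case True
        with False show ?thesis by (auto simp: doubleton_eq_iff)
      next
        case False
        then have "(y, z) \<in> adjrel (E - {{u, v}})" using step.hyps(2) by simp
        then show ?thesis using u by (meson rtrancl_into_rtrancl)
      qed
    qed
  qed simp
  then show ?thesis using is_treeD(5)[OF t v y(1)] y unfolding comp_def by blast
qed

text \<open>A walk from \<open>u\<^sub>1\<close> avoiding the edge \<open>u\<^sub>1v\<close> never visits \<open>v\<close>, so it avoids the edge
  \<open>u\<^sub>2v\<close> too.\<close>
lemma tree_branch_subset_comp:
  assumes t: "is_tree V E" and u1: "u1 \<in> neighbours E v" and u2: "u2 \<in> neighbours E v"
    and ne: "u1 \<noteq> u2"
  shows "comp V (E - {{u1, v}}) u1 \<subseteq> comp V (E - {{u2, v}}) v"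
proof -
  have e1: "{u1, v} \<in> E" and e2: "{u2, v} \<in> E" using u1 u2 by (simp_all add: neighbours_def)
  have "(v, y) \<in> (adjrel (E - {{u2, v}}))\<^sup>*" if "(u1, y) \<in> (adjrel (E - {{u1, v}}))\<^sup>*" for y
    using that
  proof (induction rule: rtrancl_induct)
    case base
    have "{v, u1} \<in> E - {{u2, v}}" using e1 ne by (auto simp: insert_commute doubleton_eq_iff)
    then show ?case by (simp add: r_into_rtrancl)
  next
    case (step y z)
    have "y \<noteq> v" using step.hyps(1) tree_Diff_edge_disconnects[OF t e1] by blast
    show ?case
    proof (cases "{y, z} = {u2, v}")
      case True
      with \<open>y \<noteq> v\<close> have "z = v" by (auto simp: doubleton_eq_iff)
      then show ?thesis by simp
    next
      case False
      then have "(y, z) \<in> adjrel (E - {{u2, v}})" using step.hyps(2) by simp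
      with step.IH show ?thesis by (rule rtrancl_into_rtrancl)
    qed
  qed
  then show ?thesis unfolding comp_def by blast
qed

lemma tree_branches_disjoint:
  assumes t: "is_tree V E" and "u1 \<in> neighbours E v" "u2 \<in> neighbours E v" "u1 \<noteq> u2"
  shows "comp V (E - {{u1, v}}) u1 \<inter> comp V (E - {{u2, v}}) u2 = {}"
  using tree_branch_subset_comp[OF assms] tree_Diff_edge_comps(2)[of V E u2 v] assms
  by (auto simp: neighbours_def)

lemma tree_wt_branches:
  assumes t: "is_tree V E" and v: "v \<in> V"
  shows "wt \<omega> V = \<omega> v + (\<Sum>u\<in>neighbours E v. wt \<omega> (comp V (E - {{u, v}}) u))"
proof -
  define U where "U = (\<Union>u\<in>neighbours E v. comp V (E - {{u, v}}) u)"
  have "V \<subseteq> insert v U"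
  proof
    fix y assume "y \<in> V"
    then show "y \<in> insert v U"
      using tree_in_branch[OF t v, of y] unfolding U_def by (cases "y = v") auto
  qed
  moreover have "U \<subseteq> V" unfolding U_def using comp_subset by fast
  ultimately have V: "V = insert v U" using v by blast
  have "v \<notin> U"
    using tree_Diff_edge_disconnects[OF t] unfolding U_def comp_def neighbours_def by blast
  moreover have fin: "finite V" "finite (neighbours E v)"
    using is_treeD(1,2)[OF t] graph_finite_neighbours by auto
  moreover have "finite U" using fin(1) \<open>U \<subseteq> V\<close> by (rule finite_subset[rotated])
  ultimately have "wt \<omega> V = \<omega> v + sum \<omega> U" unfolding wt_def V by simp
  also have "sum \<omega> U = (\<Sum>u\<in>neighbours E v. wt \<omega> (comp V (E - {{u, v}}) u))"
    unfolding U_def wt_def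
  proof (rule sum.UNION_disjoint[OF fin(2)])
    show "\<forall>u\<in>neighbours E v. finite (comp V (E - {{u, v}}) u)"
      using fin(1) comp_subset finite_subset by metis
    show "\<forall>u1\<in>neighbours E v. \<forall>u2\<in>neighbours E v. u1 \<noteq> u2 \<longrightarrow>
        comp V (E - {{u1, v}}) u1 \<inter> comp V (E - {{u2, v}}) u2 = {}"
      by (intro ballI impI tree_branches_disjoint[OF t])
  qed
  finally show ?thesis .
qed

lemma tree_neighbours_nonempty:
  assumes t: "is_tree V E" and "card V > 1" and v: "v \<in> V"
  shows "neighbours E v \<noteq> {}"
proof -
  obtain y where "y \<in> V" "y \<noteq> v"
    using assms is_treeD(2)[OF t] by (metis card_le_Suc0_iff_eq less_Suc_eq_le not_le One_nat_def)
  then show ?thesis using tree_in_branch[OF t v] by blast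
qed

subsection \<open>An edge with two heavy sides\<close>

lemma tree_ex_heavy_edge:
  assumes t: "is_tree V E" and V: "card V > 1"
    and heavy: "\<forall>v\<in>V. \<omega> v + real (deg E v) * c \<le> wt \<omega> V"
  shows "\<exists>e\<in>E. \<forall>x\<in>e. c \<le> wt \<omega> (comp V (E - {e}) x)"
proof (rule ccontr)
  assume "\<not> ?thesis"
  then have "\<forall>e\<in>E. \<exists>x\<in>e. wt \<omega> (comp V (E - {e}) x) < c" by (meson not_le)
  then obtain light where light: "\<And>e. e \<in> E \<Longrightarrow> light e \<in> e \<and> wt \<omega> (comp V (E - {e}) (light e)) < c"
    by metis
  have "light ` E \<subseteq> V" using light is_treeD(1)[OF t] unfolding graph_def by blast
  moreover have "card (light ` E) < card V"
    using card_image_le[OF is_treeD(3)[OF t], of light] is_treeD(4)[OF t] V by linarith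
  ultimately obtain v where v: "v \<in> V" "v \<notin> light ` E" by (metis less_irrefl subsetI subset_antisym)
  let ?N = "neighbours E v"
  have "wt \<omega> (comp V (E - {{u, v}}) u) < c" if "u \<in> ?N" for u
  proof -
    have e: "{u, v} \<in> E" using that by (simp add: neighbours_def)
    with light[OF e] v(2) have "light {u, v} = u" by (auto simp: image_iff)
    with light[OF e] show ?thesis by simp
  qed
  then have "(\<Sum>u\<in>?N. wt \<omega> (comp V (E - {{u, v}}) u)) < (\<Sum>u\<in>?N. c)"
    using tree_neighbours_nonempty[OF t V v(1)] graph_finite_neighbours[OF is_treeD(1)[OF t]]
    by (intro sum_strict_mono) auto
  then have "wt \<omega> V < \<omega> v + real (deg E v) * c"
    using tree_wt_branches[OF t v(1)] by (simp add: deg_eq_card_neighbours)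
  with heavy v(1) show False by fastforce
qed

lemma graph_edge_finite_nonempty:
  assumes "graph V E" "e \<in> E"
  shows "finite e" "e \<noteq> {}"
  using assms unfolding graph_def by (auto intro: card_ge_0_finite)

lemma beta2_ge:
  assumes "graph V E" "e \<in> E" "\<forall>x\<in>e. c \<le> wt \<omega> (comp V (E - {e}) x)"
  shows "c \<le> beta2 V E \<omega>"
proof -
  have "c \<le> Min ((\<lambda>x. wt \<omega> (comp V (E - {e}) x)) ` e)"
    using graph_edge_finite_nonempty[OF assms(1,2)] assms(3) by simp
  also have "\<dots> \<le> beta2 V E \<omega>"
    unfolding beta2_def using assms(2) graph_finite_edges[OF assms(1)] by (intro Max_ge) auto
  finally show ?thesis .
qed

lemma alpha2_le:
  assumes "graph V E" "e \<in> E" "\<forall>x\<in>e. wt \<omega> (comp V (E - {e}) x) \<le> c"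
  shows "alpha2 V E \<omega> \<le> c"
proof -
  have "alpha2 V E \<omega> \<le> Max ((\<lambda>x. wt \<omega> (comp V (E - {e}) x)) ` e)"
    unfolding alpha2_def using assms(2) graph_finite_edges[OF assms(1)] by (intro Min_le) auto
  also have "\<dots> \<le> c"
    using graph_edge_finite_nonempty[OF assms(1,2)] assms(3) by simp
  finally show ?thesis .
qed

subsection \<open>Degrees in quasi-binary trees\<close>

lemma deg_le_deg_inj_hom:
  assumes "graph V E" "graph B F" "inj_on f V" "v \<in> V"
    and "\<forall>u\<in>V. \<forall>w\<in>V. {u, w} \<in> E \<longrightarrow> {f u, f w} \<in> F"
  shows "deg E v \<le> deg F (f v)"
proof -
  have N: "neighbours E v \<subseteq> V" using graph_neighbours_subset[OF assms(1)] .
  have "f ` neighbours E v \<subseteq> neighbours F (f v)"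
    using N assms(4,5) unfolding neighbours_def by auto
  moreover have "finite (neighbours F (f v))" using graph_finite_neighbours[OF assms(2)] .
  ultimately show ?thesis
    unfolding deg_eq_card_neighbours using inj_on_subset[OF assms(3) N] card_inj_on_le by blast
qed

lemma quasi_binary_deg_le_3:
  assumes "quasi_binary V E" "v \<in> V"
  shows "deg E v \<le> 3"
proof -
  obtain B F f where bt: "binary_tree B F" and "inj_on f V" "f ` V \<subseteq> B"
    and "\<forall>u\<in>V. \<forall>w\<in>V. {u, w} \<in> E \<longrightarrow> {f u, f w} \<in> F"
    using assms(1) unfolding quasi_binary_def by blast
  moreover obtain r where "deg F r = 2" "\<forall>w\<in>B. w \<noteq> r \<longrightarrow> deg F w = 1 \<or> deg F w = 3"
    using bt unfolding binary_tree_def by blast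
  moreover have "graph V E" "graph B F"
    using assms(1) bt unfolding quasi_binary_def binary_tree_def is_tree_def by blast+
  ultimately show ?thesis
    using deg_le_deg_inj_hom[of V E B F f v] assms(2) by (cases "f v = r") force+
qed

lemma quasi_binary_deg_cases:
  assumes qb: "quasi_binary V E" and "card V > 1" and v: "v \<in> V"
  obtains "deg E v = 1" | "deg E v = 2" | "deg E v = 3"
proof -
  have t: "is_tree V E" using qb unfolding quasi_binary_def by blast
  have "deg E v \<ge> 1"
    using tree_neighbours_nonempty[OF t assms(2) v] graph_finite_neighbours[OF is_treeD(1)[OF t]]
    by (simp add: deg_eq_card_neighbours Suc_le_eq card_gt_0_iff)
  with quasi_binary_deg_le_3[OF qb v] that show thesis by linarith
qed

theorem lemma2:
  fixes V :: "'a set" and E :: "'a set set" and \<omega> :: "'a \<Rightarrow> real" and \<gamma> :: real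
  assumes "quasi_binary V E"
    and "card V > 1"
    and "\<forall>v\<in>V. deg E v \<ge> 3 \<longrightarrow> \<omega> v \<le> \<gamma>"
    and "\<forall>v\<in>V. wt \<omega> V \<ge> (3 * \<omega> v - \<gamma>) / 2"
    and "\<forall>v\<in>V. deg E v \<ge> 2 \<longrightarrow> wt \<omega> V \<ge> 3 * \<omega> v - 2 * \<gamma>"
  shows "beta2 V E \<omega> \<ge> (wt \<omega> V - \<gamma>) / 3 \<and> alpha2 V E \<omega> \<le> (2 * wt \<omega> V + \<gamma>) / 3"
proof -
  have t: "is_tree V E" using assms(1) unfolding quasi_binary_def by blast
  note g = is_treeD(1)[OF t]
  define c where "c = (wt \<omega> V - \<gamma>) / 3"
  have "\<omega> v + real (deg E v) * c \<le> wt \<omega> V" if v: "v \<in> V" for v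
    using quasi_binary_deg_cases[OF assms(1,2) v]
  proof cases
    case 1
    then show ?thesis using assms(4) v unfolding c_def by (simp add: field_simps)
  next
    case 2
    then show ?thesis using assms(5) v unfolding c_def by (simp add: field_simps)
  next
    case 3
    then show ?thesis using assms(3) v unfolding c_def by (simp add: field_simps)
  qed
  then obtain e where e: "e \<in> E" and heavy: "\<forall>x\<in>e. c \<le> wt \<omega> (comp V (E - {e}) x)"
    using tree_ex_heavy_edge[OF t assms(2)] by blast
  then obtain a b where ab: "e = {a, b}"
    using g unfolding graph_def by (meson card_2_iff)
  have "\<forall>x\<in>e. wt \<omega> (comp V (E - {e}) x) \<le> wt \<omega> V - c"
    using heavy tree_wt_Diff_edge[OF t e[unfolded ab], of \<omega>] unfolding ab by auto
  then have "alpha2 V E \<omega> \<le> wt \<omega> V - c" by (rule alpha2_le[OF g e])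
  moreover have "c \<le> beta2 V E \<omega>" using g e heavy by (rule beta2_ge)
  ultimately show ?thesis unfolding c_def by (simp add: field_simps)
qed

end
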